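(* Fix real $a$, $b>0$, $c>0$ and a prior $F$ with support $[\alpha,\beta]\subset(0,c)$ and positive variance. Let $x^u(\theta)=k\theta+d$ be the unique symmetric Bayesian Nash equilibrium of the affine relaxation (for $a=0$, $x^u(\theta)=(c-\theta)/(2b)$), and assume it is fully active, i.e. $x^u(\beta)\ge0$. Let $\underline x=x^u(\beta)$, $\overline x=x^u(\alpha)$. If $$\overline x\le\frac1\alpha,\qquad a\le b\alpha,\qquad c\alpha^2-2b\alpha+a\ge0,\qquad \min_{y\in[\underline x,\overline x]}\Bigl(\tfrac12-cy+by^2\Bigr)\ge0,$$ then $x^u$ is a symmetric Bayesian Nash equilibrium of the truncated Bayesian contest.
   Context: Let $P(x,y)=\tfrac12+(x-y)\bigl(c-b(x+y)+axy\bigr)$ and $\bar P=\min\{1,\max\{0,P\}\}$. Types are i.i.d. from $F$. In the affine relaxation, actions are real numbers and a type-$\theta$ player choosing $\tilde x$ against opponent strategy $x(\cdot)$ receives $\int[P(\tilde x,x(\theta'))-\theta\tilde x]\,dF(\theta')$. In the truncated Bayesian contest, actions are efforts in $[0,\infty)$ and the payoff is $\int[\bar P(\tilde x,x(\theta'))-\theta\tilde x]\,dF(\theta')$. *)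

theory Defs
  imports "HOL-Probability.Probability"
begin

definition contestP :: "real \<Rightarrow> real \<Rightarrow> real \<Rightarrow> real \<Rightarrow> real \<Rightarrow> real" where
  "contestP a b c x y = 1/2 + (x - y) * (c - b * (x + y) + a * x * y)"

definition contestPbar :: "real \<Rightarrow> real \<Rightarrow> real \<Rightarrow> real \<Rightarrow> real \<Rightarrow> real" where
  "contestPbar a b c x y = min 1 (max 0 (contestP a b c x y))"

definition measure_support :: "real measure \<Rightarrow> real set" where
  "measure_support M = {t. \<forall>e>0. 0 < measure M {t - e <..< t + e}}"

definition relax_payoff ::
  "real \<Rightarrow> real \<Rightarrow> real \<Rightarrow> real measure \<Rightarrow> (real \<Rightarrow> real) \<Rightarrow> real \<Rightarrow> real \<Rightarrow> real" where
  "relax_payoff a b c M s \<theta> xt = (\<integral>\<theta>'. contestP a b c xt (s \<theta>') - \<theta> * xt \<partial>M)"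

definition trunc_payoff ::
  "real \<Rightarrow> real \<Rightarrow> real \<Rightarrow> real measure \<Rightarrow> (real \<Rightarrow> real) \<Rightarrow> real \<Rightarrow> real \<Rightarrow> real" where
  "trunc_payoff a b c M s \<theta> xt = (\<integral>\<theta>'. contestPbar a b c xt (s \<theta>') - \<theta> * xt \<partial>M)"

definition sym_BNE_relax ::
  "real \<Rightarrow> real \<Rightarrow> real \<Rightarrow> real measure \<Rightarrow> (real \<Rightarrow> real) \<Rightarrow> bool" where
  "sym_BNE_relax a b c M s \<longleftrightarrow>
     (\<forall>\<theta>\<in>measure_support M. \<forall>xt::real.
        relax_payoff a b c M s \<theta> xt \<le> relax_payoff a b c M s \<theta> (s \<theta>))"

definition sym_BNE_trunc ::
  "real \<Rightarrow> real \<Rightarrow> real \<Rightarrow> real measure \<Rightarrow> (real \<Rightarrow> real) \<Rightarrow> bool" where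
  "sym_BNE_trunc a b c M s \<longleftrightarrow>
     (\<forall>\<theta>\<in>measure_support M. 0 \<le> s \<theta>) \<and>
     (\<forall>\<theta>\<in>measure_support M. \<forall>xt::real. 0 \<le> xt \<longrightarrow>
        trunc_payoff a b c M s \<theta> xt \<le> trunc_payoff a b c M s \<theta> (s \<theta>))"

end

theory Submission
  imports Defs
begin

text \<open>Revealed preference makes every equilibrium of the relaxation non-increasing in the type,
  so the equilibrium efforts lie in \<open>[x\<^sup>u(\<beta>), x\<^sup>u(\<alpha>)] \<subseteq> [0, 1/\<alpha>]\<close>. On the box \<open>[0, 1/\<alpha>]\<^sup>2\<close> the
  win probability \<open>P(x, y)\<close> is concave in \<open>x\<close> and non-negative at \<open>x = 0\<close> and \<open>x = 1/\<alpha>\<close>, hence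
  non-negative, and by \<open>P(x, y) + P(y, x) = 1\<close> it also stays below \<open>1\<close> at equilibrium effort
  pairs. So truncation does not change the equilibrium payoff, can only lower the payoff of a
  deviation \<open>x \<le> 1/\<alpha>\<close>, and a deviation \<open>x > 1/\<alpha>\<close> costs more than any prize, while the
  equilibrium payoff is at least that of \<open>x = 0\<close>, which is non-negative.\<close>

lemma AE_in_measure_support:
  assumes "finite_measure M" and borel: "sets M = sets borel"
  shows "AE t in M. t \<in> measure_support M"
proof -
  interpret finite_measure M by fact
  define F where "F = {{t - e <..< t + e} | t e. e > 0 \<and> measure M {t - e <..< t + e} = 0}"
  have "\<And>S. S \<in> F \<Longrightarrow> open S" unfolding F_def by auto
  then obtain F' where F': "F' \<subseteq> F" "countable F'" "\<Union>F' = \<Union>F" by (rule Lindelof)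
  have "\<Union>(id ` F') \<in> null_sets M"
  proof (rule null_sets_UN')
    fix S assume "S \<in> F'"
    then obtain t e where S: "S = {t - e <..< t + e}" "measure M S = 0"
      using F' unfolding F_def by auto
    then show "id S \<in> null_sets M" using borel emeasure_eq_measure[of S] by auto
  qed fact
  then have null: "\<Union>F' \<in> null_sets M" by simp
  show ?thesis
  proof (rule AE_I'[OF null], safe)
    fix x assume "x \<notin> measure_support M"
    then obtain e where e: "e > 0" "\<not> 0 < measure M {x - e <..< x + e}"
      unfolding measure_support_def by auto
    then have "measure M {x - e <..< x + e} = 0"
      using measure_nonneg[of M "{x - e <..< x + e}"] by linarith
    then have "{x - e <..< x + e} \<in> F" unfolding F_def using e(1) by blast
    moreover have "x \<in> {x - e <..< x + e}" using e by auto
    ultimately show "x \<in> \<Union>F'" using F' by blast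
  qed
qed

lemma integrable_continuous_AE_compact:
  fixes f :: "real \<Rightarrow> real"
  assumes "finite_measure M" and borel: "sets M = sets borel"
    and "compact K" and ae: "AE t in M. t \<in> K" and cont: "continuous_on UNIV f"
  shows "integrable M f"
proof -
  interpret finite_measure M by fact
  have "compact (f ` K)"
    using compact_continuous_image[OF continuous_on_subset[OF cont subset_UNIV] \<open>compact K\<close>] .
  then have "bounded (f ` K)" by (rule compact_imp_bounded)
  then obtain B where B: "\<And>t. t \<in> K \<Longrightarrow> norm (f t) \<le> B"
    unfolding bounded_iff by blast
  have meas: "f \<in> borel_measurable M"
    using borel_measurable_continuous_onI[OF cont] measurable_cong_sets[OF borel refl] by auto
  show ?thesis
    by (rule integrable_const_bound[where B=B]) (use ae B meas in auto)
qed

lemma integrable_contestPbar: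
  assumes "finite_measure M" and "integrable M (\<lambda>t. contestP a b c x (s t))"
  shows "integrable M (\<lambda>t. contestPbar a b c x (s t))"
proof -
  interpret finite_measure M by fact
  have "(\<lambda>t. contestPbar a b c x (s t)) \<in> borel_measurable M"
    unfolding contestPbar_def using borel_measurable_integrable[OF assms(2)] by measurable
  then show ?thesis
    by (intro integrable_const_bound[where B=1]) (auto simp: contestPbar_def)
qed

lemma relax_payoff_eq:
  assumes "prob_space M" and "integrable M (\<lambda>t. contestP a b c x (s t))"
  shows "relax_payoff a b c M s \<theta> x = (\<integral>t. contestP a b c x (s t) \<partial>M) - \<theta> * x"
proof -
  interpret prob_space M by fact
  show ?thesis using assms(2) unfolding relax_payoff_def by (simp add: prob_space)
qed

lemma trunc_payoff_eq:
  assumes "prob_space M" and "integrable M (\<lambda>t. contestP a b c x (s t))"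
  shows "trunc_payoff a b c M s \<theta> x = (\<integral>t. contestPbar a b c x (s t) \<partial>M) - \<theta> * x"
proof -
  interpret prob_space M by fact
  show ?thesis
    using integrable_contestPbar[OF finite_measure_axioms assms(2)] unfolding trunc_payoff_def
    by (simp add: prob_space)
qed

lemma contestP_swap: "contestP a b c x y = 1 - contestP a b c y x"
  unfolding contestP_def by (simp add: algebra_simps)

lemma contestP_zero_left: "contestP a b c 0 y = 1/2 - c * y + b * y^2"
  unfolding contestP_def by (simp add: algebra_simps power2_eq_square)

text \<open>\<open>x \<mapsto> P(x, y)\<close> is a quadratic with leading coefficient \<open>a y - b\<close>, compared here with its
  chord through \<open>x = 0\<close> and \<open>x = h\<close>.\<close>
lemma contestP_chord:
  "h * contestP a b c x y - (h - x) * contestP a b c 0 y - x * contestP a b c h y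
     = (a * y - b) * h * x * (x - h)"
  unfolding contestP_def by (simp add: field_simps)

lemma contestP_right_nonneg:
  assumes "0 \<le> y" "y \<le> h" and "a * h \<le> b" and "c - 2 * b * h + a * h^2 \<ge> 0"
  shows "contestP a b c h y \<ge> 0"
proof -
  have "(h - y) * (b - a * h) \<ge> 0" using assms by simp
  then have "c - b * (h + y) + a * h * y \<ge> c - 2 * b * h + a * h^2"
    by (simp add: algebra_simps power2_eq_square)
  then have "(h - y) * (c - b * (h + y) + a * h * y) \<ge> 0" using assms by simp
  then show ?thesis unfolding contestP_def by simp
qed

lemma contestP_nonneg:
  assumes "b > 0" "h > 0" and "a * h \<le> b" and "c - 2 * b * h + a * h^2 \<ge> 0"
    and "0 \<le> y" "y \<le> h" and "1/2 - c * y + b * y^2 \<ge> 0"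
    and "0 \<le> x" "x \<le> h"
  shows "contestP a b c x y \<ge> 0"
proof -
  have concave: "a * y - b \<le> 0"
  proof (cases "a \<ge> 0")
    case True
    then have "a * y \<le> a * h" using \<open>y \<le> h\<close> by (simp add: mult_left_mono)
    then show ?thesis using assms by linarith
  next
    case False
    then have "a * y \<le> 0" using \<open>0 \<le> y\<close> by (simp add: mult_nonpos_nonneg)
    then show ?thesis using \<open>b > 0\<close> by linarith
  qed
  have "(a * y - b) * (x - h) \<ge> 0" using concave \<open>x \<le> h\<close> by (simp add: mult_nonpos_nonpos)
  then have "(a * y - b) * (x - h) * (h * x) \<ge> 0" using assms by simp
  moreover have "(h - x) * contestP a b c 0 y \<ge> 0"
    using assms by (simp add: contestP_zero_left)
  moreover have "x * contestP a b c h y \<ge> 0"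
    using assms contestP_right_nonneg[of y h a b c] by simp
  ultimately have "h * contestP a b c x y \<ge> 0"
    using contestP_chord[of h a b c x y] by (simp add: algebra_simps)
  then show ?thesis using assms by (simp add: zero_le_mult_iff)
qed

lemma sym_BNE_relax_revealed_preference:
  assumes "prob_space M" and int: "\<And>x. integrable M (\<lambda>t. contestP a b c x (s t))"
    and "sym_BNE_relax a b c M s"
    and "\<theta>\<^sub>1 \<in> measure_support M" "\<theta>\<^sub>2 \<in> measure_support M"
  shows "(\<theta>\<^sub>1 - \<theta>\<^sub>2) * (s \<theta>\<^sub>1 - s \<theta>\<^sub>2) \<le> 0"
proof -
  define W where "W x = (\<integral>t. contestP a b c x (s t) \<partial>M)" for x
  have "W (s \<theta>\<^sub>2) - \<theta>\<^sub>1 * s \<theta>\<^sub>2 \<le> W (s \<theta>\<^sub>1) - \<theta>\<^sub>1 * s \<theta>\<^sub>1"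
    and "W (s \<theta>\<^sub>1) - \<theta>\<^sub>2 * s \<theta>\<^sub>1 \<le> W (s \<theta>\<^sub>2) - \<theta>\<^sub>2 * s \<theta>\<^sub>2"
    using assms unfolding sym_BNE_relax_def relax_payoff_eq[OF assms(1) int] W_def by auto
  then show ?thesis by (simp add: algebra_simps)
qed

lemma sym_BNE_relax_between_endpoints:
  assumes "prob_space M" and "\<And>x. integrable M (\<lambda>t. contestP a b c x (s t))"
    and "sym_BNE_relax a b c M s" and supp: "measure_support M = {\<alpha>..\<beta>}"
    and \<theta>: "\<theta> \<in> {\<alpha>..\<beta>}"
  shows "s \<beta> \<le> s \<theta>" "s \<theta> \<le> s \<alpha>"
proof -
  have "\<alpha> \<in> measure_support M" "\<beta> \<in> measure_support M" "\<theta> \<in> measure_support M"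
    using supp \<theta> by auto
  then have "(\<theta> - \<alpha>) * (s \<theta> - s \<alpha>) \<le> 0" "(\<beta> - \<theta>) * (s \<beta> - s \<theta>) \<le> 0"
    using sym_BNE_relax_revealed_preference[OF assms(1-3)] by blast+
  then show "s \<beta> \<le> s \<theta>" "s \<theta> \<le> s \<alpha>"
    using \<theta> by (auto simp: mult_le_0_iff)
qed

lemma sym_BNE_relax_imp_sym_BNE_trunc:
  assumes prob: "prob_space M" and borel: "sets M = sets borel"
    and int: "\<And>x. integrable M (\<lambda>t. contestP a b c x (s t))"
    and relax: "sym_BNE_relax a b c M s" and "h > 0"
    and types: "\<And>\<theta>. \<theta> \<in> measure_support M \<Longrightarrow> 1 \<le> h * \<theta>"
    and efforts: "\<And>\<theta>. \<theta> \<in> measure_support M \<Longrightarrow> s \<theta> \<in> {0..h}"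
    and nonneg: "\<And>x \<theta>. x \<in> {0..h} \<Longrightarrow> \<theta> \<in> measure_support M \<Longrightarrow> 0 \<le> contestP a b c x (s \<theta>)"
  shows "sym_BNE_trunc a b c M s"
proof -
  interpret prob_space M by fact
  have ae: "AE t in M. t \<in> measure_support M"
    using AE_in_measure_support[OF finite_measure_axioms borel] .
  define W where "W x = (\<integral>t. contestP a b c x (s t) \<partial>M)" for x
  define Wbar where "Wbar x = (\<integral>t. contestPbar a b c x (s t) \<partial>M)" for x
  have int_bar: "integrable M (\<lambda>t. contestPbar a b c x (s t))" for x
    using integrable_contestPbar[OF finite_measure_axioms int] .
  have opt: "W x - \<theta> * x \<le> W (s \<theta>) - \<theta> * s \<theta>" if "\<theta> \<in> measure_support M" for \<theta> x
    using relax that unfolding sym_BNE_relax_def relax_payoff_eq[OF prob int] W_def by blast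
  have at_most_one: "contestP a b c (s \<theta>) (s t) \<le> 1"
    if "\<theta> \<in> measure_support M" "t \<in> measure_support M" for \<theta> t
    using nonneg[OF efforts[OF that(2)] that(1)] contestP_swap[of a b c "s \<theta>" "s t"] by linarith
  show ?thesis
    unfolding sym_BNE_trunc_def trunc_payoff_eq[OF prob int] Wbar_def[symmetric]
  proof (intro conjI ballI allI impI)
    fix \<theta> assume "\<theta> \<in> measure_support M"
    then show "0 \<le> s \<theta>" using efforts by auto
  next
    fix \<theta> x :: real assume \<theta>: "\<theta> \<in> measure_support M" and "0 \<le> x"
    have "contestPbar a b c (s \<theta>) (s t) = contestP a b c (s \<theta>) (s t)"
      if "t \<in> measure_support M" for t
      using nonneg[OF efforts[OF \<theta>] that] at_most_one[OF \<theta> that] by (simp add: contestPbar_def)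
    then have "Wbar (s \<theta>) = W (s \<theta>)"
      unfolding Wbar_def W_def
      by (intro integral_cong_AE borel_measurable_integrable int int_bar eventually_mono[OF ae])
    moreover have "0 \<le> W 0"
      unfolding W_def using \<open>h > 0\<close> by (intro integral_nonneg_AE eventually_mono[OF ae] nonneg) auto
    then have "0 \<le> W (s \<theta>) - \<theta> * s \<theta>" using opt[OF \<theta>, of 0] by simp
    moreover have "Wbar x - \<theta> * x \<le> W (s \<theta>) - \<theta> * s \<theta>"
    proof (cases "x \<le> h")
      case True
      have "contestPbar a b c x (s t) \<le> contestP a b c x (s t)" if "t \<in> measure_support M" for t
        using nonneg[OF _ that, of x] \<open>0 \<le> x\<close> True by (simp add: contestPbar_def)
      then have "Wbar x \<le> W x"
        unfolding Wbar_def W_def by (intro integral_mono_AE int int_bar eventually_mono[OF ae])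
      then show ?thesis using opt[OF \<theta>, of x] by linarith
    next
      case False
      have "Wbar x \<le> (\<integral>t. 1 \<partial>M)"
        unfolding Wbar_def using int_bar by (intro integral_mono) (auto simp: contestPbar_def)
      moreover have "1 \<le> \<theta> * x"
      proof -
        have "0 < h * \<theta>" using types[OF \<theta>] by linarith
        then have "h * \<theta> \<le> x * \<theta>" using False \<open>h > 0\<close> by (simp add: zero_less_mult_iff)
        then show ?thesis using types[OF \<theta>] by (simp add: mult.commute)
      qed
      ultimately show ?thesis using \<open>0 \<le> W (s \<theta>) - \<theta> * s \<theta>\<close> by (simp add: prob_space)
    qed
    ultimately show "Wbar x - \<theta> * x \<le> Wbar (s \<theta>) - \<theta> * s \<theta>" by simp
  qed
qed

text \<open>The hypotheses \<open>c > 0\<close>, \<open>\<beta> < c\<close> and positive variance only concern existence and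
  uniqueness of the affine equilibrium, which is assumed here; the proof does not use them.\<close>
theorem proposition10:
  fixes a b c \<alpha> \<beta> k d :: real and M :: "real measure"
  assumes b_pos: "b > 0" and c_pos: "c > 0"
    and prob: "prob_space M" and borel: "sets M = sets borel"
    and supp: "measure_support M = {\<alpha>..\<beta>}"
    and range: "0 < \<alpha>" "\<alpha> \<le> \<beta>" "\<beta> < c"
    and var_pos: "prob_space.variance M (\<lambda>t. t) > 0"
    and eq_relax: "sym_BNE_relax a b c M (\<lambda>\<theta>. k * \<theta> + d)"
    and active: "k * \<beta> + d \<ge> 0"
    and c1: "k * \<alpha> + d \<le> 1 / \<alpha>"
    and c2: "a \<le> b * \<alpha>"
    and c3: "c * \<alpha>^2 - 2 * b * \<alpha> + a \<ge> 0"
    and c4: "\<forall>y\<in>{k * \<beta> + d .. k * \<alpha> + d}. 1/2 - c * y + b * y^2 \<ge> 0"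
  shows "sym_BNE_trunc a b c M (\<lambda>\<theta>. k * \<theta> + d)"
proof -
  let ?s = "\<lambda>\<theta>. k * \<theta> + d"
  have int: "integrable M (\<lambda>t. contestP a b c x (?s t))" for x
    using AE_in_measure_support[OF prob_space.finite_measure[OF prob] borel] supp
    by (intro integrable_continuous_AE_compact[OF prob_space.finite_measure[OF prob] borel,
          of "{\<alpha>..\<beta>}"]) (auto simp: contestP_def intro!: continuous_intros)
  have between: "?s \<theta> \<in> {?s \<beta> .. ?s \<alpha>}" if "\<theta> \<in> {\<alpha>..\<beta>}" for \<theta>
    using sym_BNE_relax_between_endpoints[OF prob int eq_relax supp that] by simp
  have h_conds: "1/\<alpha> > 0" "a * (1/\<alpha>) \<le> b" "c - 2 * b * (1/\<alpha>) + a * (1/\<alpha>)^2 \<ge> 0"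
    using range c2 c3 by (simp_all add: field_simps power2_eq_square)
  show ?thesis
  proof (rule sym_BNE_relax_imp_sym_BNE_trunc[OF prob borel int eq_relax, of "1/\<alpha>"])
    fix \<theta> assume "\<theta> \<in> measure_support M"
    then have \<theta>: "\<theta> \<in> {\<alpha>..\<beta>}" using supp by simp
    then show "1 \<le> 1/\<alpha> * \<theta>" using range by (simp add: field_simps)
    show efforts: "?s \<theta> \<in> {0..1/\<alpha>}" using between[OF \<theta>] active c1 by auto
    fix x assume "x \<in> {0..1/\<alpha>}"
    then show "0 \<le> contestP a b c x (?s \<theta>)"
      using contestP_nonneg[OF b_pos h_conds] efforts c4 between[OF \<theta>] by auto
  qed (use range in simp)
qed

end
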